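(* Let $M$ and $M'$ be two stable matchings in an instance $I$ of SPA-S, and let $M^\lor$ be the assignment defined from $M,M'$ in the context. If a lecturer $l_k$ is undersubscribed in $M^\lor$, then $l_k$ is undersubscribed in both $M$ and $M'$.
   Context: An instance $I$ of SPA-S consists of a finite set $\mathcal{S}$ of students, a finite set $\mathcal{P}$ of projects and a finite set $\mathcal{L}$ of lecturers. Each student $s_i$ ranks a subset $A_i\subseteq\mathcal{P}$ (its acceptable projects) in strict order. Each project is offered by exactly one lecturer; lecturer $l_k$ offers a nonempty set $P_k\subseteq\mathcal{P}$, the $P_k$ partitioning $\mathcal{P}$. Each lecturer $l_k$ ranks in strict order the students who find at least one project of $P_k$ acceptable. Projects have capacities $c_j\in\mathbb{Z}^+$, lecturers have capacities $d_k\in\mathbb{Z}^+$ with $\max\{c_j:p_j\in P_k\}\le d_k\le\sum\{c_j:p_j\in P_k\}$. A pair $(s_i,p_j)$, $p_j$ offered by $l_k$, is acceptable if $p_j\in A_i$ and $s_i$ is on $l_k$'s list. A matching $M$ is a set of acceptable pairs with each student in at most one pair, $|M(p_j)|\le c_j$, $|M(l_k)|\le d_k$, where for an assignment $M$ (a set of acceptable pairs), $M(s_i)$, $M(p_j)$, $M(l_k)$ denote the project of $s_i$, the students assigned to $p_j$, and the students assigned to projects of $l_k$. Undersubscribed/full means fewer than/exactly capacity many assigned students. An acceptable pair $(s_i,p_j)\notin M$ ($p_j$ offered by $l_k$) blocks $M$ if ($s_i$ is unassigned or prefers $p_j$ to $M(s_i)$) and one of: (P1) $p_j$ and $l_k$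 undersubscribed; (P2) $p_j$ undersubscribed, $l_k$ full, $s_i\in M(l_k)$; (P3) $p_j$ undersubscribed, $l_k$ full, $l_k$ prefers $s_i$ to the worst student of $M(l_k)$; (P4) $p_j$ full and $l_k$ prefers $s_i$ to the worst student of $M(p_j)$. $M$ is stable if it has no blocking pair. Given stable matchings $M,M'$, $M^\lor$ is the assignment in which each student unassigned in both $M$ and $M'$ is unassigned, each student assigned to the same project in both is assigned to that project, and every other student is assigned to the worse (in her preference) of her projects in $M$ and $M'$. *)

theory Defs
  imports Main
begin

text \<open>An SPA-S instance. Student preferences: (p,q) \<in> spref I s means s prefers p to q.
  Lecturer preferences: (s,t) \<in> lpref I l means l prefers s to t.\<close>

record ('s,'p,'l) spa =
  Stu   :: "'s set"
  Proj  :: "'p set"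
  Lec   :: "'l set"
  acc   :: "'s \<Rightarrow> 'p set"
  spref :: "'s \<Rightarrow> ('p \<times> 'p) set"
  lec   :: "'p \<Rightarrow> 'l"
  lpref :: "'l \<Rightarrow> ('s \<times> 's) set"
  pcap  :: "'p \<Rightarrow> nat"
  lcap  :: "'l \<Rightarrow> nat"

definition offered :: "('s,'p,'l) spa \<Rightarrow> 'l \<Rightarrow> 'p set" where
  "offered I l = {p \<in> Proj I. lec I p = l}"

definition lstudents :: "('s,'p,'l) spa \<Rightarrow> 'l \<Rightarrow> 's set" where
  "lstudents I l = {s \<in> Stu I. acc I s \<inter> offered I l \<noteq> {}}"

definition spa_instance :: "('s,'p,'l) spa \<Rightarrow> bool" where
  "spa_instance I \<longleftrightarrow>
     finite (Stu I) \<and> finite (Proj I) \<and> finite (Lec I) \<and>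
     (\<forall>s\<in>Stu I. acc I s \<subseteq> Proj I \<and> spref I s \<subseteq> acc I s \<times> acc I s
                 \<and> strict_linear_order_on (acc I s) (spref I s)) \<and>
     (\<forall>p\<in>Proj I. lec I p \<in> Lec I \<and> pcap I p > 0) \<and>
     (\<forall>l\<in>Lec I. offered I l \<noteq> {} \<and>
        lpref I l \<subseteq> lstudents I l \<times> lstudents I l \<and>
        strict_linear_order_on (lstudents I l) (lpref I l) \<and>
        lcap I l > 0 \<and>
        Max (pcap I ` offered I l) \<le> lcap I l \<and>
        lcap I l \<le> (\<Sum>p\<in>offered I l. pcap I p))"

definition acceptable :: "('s,'p,'l) spa \<Rightarrow> 's \<Rightarrow> 'p \<Rightarrow> bool" where
  "acceptable I s p \<longleftrightarrow> s \<in> Stu I \<and> p \<in> acc I s \<and> s \<in> lstudents I (lec I p)"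

definition Mproj :: "('s \<times> 'p) set \<Rightarrow> 'p \<Rightarrow> 's set" where
  "Mproj M p = {s. (s,p) \<in> M}"

definition Mlec :: "('s,'p,'l) spa \<Rightarrow> ('s \<times> 'p) set \<Rightarrow> 'l \<Rightarrow> 's set" where
  "Mlec I M l = {s. \<exists>p. (s,p) \<in> M \<and> lec I p = l}"

definition assigned :: "('s \<times> 'p) set \<Rightarrow> 's \<Rightarrow> bool" where
  "assigned M s \<longleftrightarrow> (\<exists>p. (s,p) \<in> M)"

definition Mstu :: "('s \<times> 'p) set \<Rightarrow> 's \<Rightarrow> 'p" where
  "Mstu M s = (THE p. (s,p) \<in> M)"

definition matching :: "('s,'p,'l) spa \<Rightarrow> ('s \<times> 'p) set \<Rightarrow> bool" where
  "matching I M \<longleftrightarrow>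
     (\<forall>(s,p)\<in>M. acceptable I s p) \<and>
     (\<forall>s p q. (s,p) \<in> M \<longrightarrow> (s,q) \<in> M \<longrightarrow> p = q) \<and>
     (\<forall>p\<in>Proj I. card (Mproj M p) \<le> pcap I p) \<and>
     (\<forall>l\<in>Lec I. card (Mlec I M l) \<le> lcap I l)"

definition proj_under :: "('s,'p,'l) spa \<Rightarrow> ('s \<times> 'p) set \<Rightarrow> 'p \<Rightarrow> bool" where
  "proj_under I M p \<longleftrightarrow> card (Mproj M p) < pcap I p"

definition proj_full :: "('s,'p,'l) spa \<Rightarrow> ('s \<times> 'p) set \<Rightarrow> 'p \<Rightarrow> bool" where
  "proj_full I M p \<longleftrightarrow> card (Mproj M p) = pcap I p"

definition lec_under :: "('s,'p,'l) spa \<Rightarrow> ('s \<times> 'p) set \<Rightarrow> 'l \<Rightarrow> bool" where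
  "lec_under I M l \<longleftrightarrow> card (Mlec I M l) < lcap I l"

definition lec_full :: "('s,'p,'l) spa \<Rightarrow> ('s \<times> 'p) set \<Rightarrow> 'l \<Rightarrow> bool" where
  "lec_full I M l \<longleftrightarrow> card (Mlec I M l) = lcap I l"

definition worst :: "('s,'p,'l) spa \<Rightarrow> 'l \<Rightarrow> 's set \<Rightarrow> 's \<Rightarrow> bool" where
  "worst I l X w \<longleftrightarrow> w \<in> X \<and> (\<forall>t\<in>X. t \<noteq> w \<longrightarrow> (t,w) \<in> lpref I l)"

definition prefers_to_worst :: "('s,'p,'l) spa \<Rightarrow> 'l \<Rightarrow> 's \<Rightarrow> 's set \<Rightarrow> bool" where
  "prefers_to_worst I l s X \<longleftrightarrow> (\<exists>w. worst I l X w \<and> (s,w) \<in> lpref I l)"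

definition blocking :: "('s,'p,'l) spa \<Rightarrow> ('s \<times> 'p) set \<Rightarrow> 's \<Rightarrow> 'p \<Rightarrow> bool" where
  "blocking I M s p \<longleftrightarrow>
     (let l = lec I p in
     acceptable I s p \<and> (s,p) \<notin> M \<and>
     (\<not> assigned M s \<or> (p, Mstu M s) \<in> spref I s) \<and>
     ((proj_under I M p \<and> lec_under I M l) \<or>
      (proj_under I M p \<and> lec_full I M l \<and> s \<in> Mlec I M l) \<or>
      (proj_under I M p \<and> lec_full I M l \<and> prefers_to_worst I l s (Mlec I M l)) \<or>
      (proj_full I M p \<and> prefers_to_worst I l s (Mproj M p))))"

definition stable :: "('s,'p,'l) spa \<Rightarrow> ('s \<times> 'p) set \<Rightarrow> bool" where
  "stable I M \<longleftrightarrow> matching I M \<and> (\<forall>s p. \<not> blocking I M s p)"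

definition Mjoin :: "('s,'p,'l) spa \<Rightarrow> ('s \<times> 'p) set \<Rightarrow> ('s \<times> 'p) set \<Rightarrow> ('s \<times> 'p) set" where
  "Mjoin I M M' =
     {(s,p). (s,p) \<in> M \<and> (s,p) \<in> M'} \<union>
     {(s,p). (s,p) \<in> M \<and> (\<exists>q. (s,q) \<in> M' \<and> (q,p) \<in> spref I s)} \<union>
     {(s,p). (s,p) \<in> M' \<and> (\<exists>q. (s,q) \<in> M \<and> (q,p) \<in> spref I s)} \<union>
     {(s,p). (s,p) \<in> M \<and> \<not> assigned M' s} \<union>
     {(s,p). (s,p) \<in> M' \<and> \<not> assigned M s}"

end

theory Submission
  imports Defs
begin

text \<open>Every student assigned in \<open>M\<close> or \<open>M'\<close> has the same project in both, or is better off
  in \<open>M\<close>, or is better off in \<open>M'\<close>. If \<open>s\<close> is better off in \<open>M\<close>, with project \<open>p\<close> of lecturer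
  \<open>l\<close>, then \<open>(s, p)\<close> does not block \<open>M'\<close>: either \<open>p\<close> is full in \<open>M'\<close> with students \<open>l\<close> prefers
  to \<open>s\<close>, or \<open>l\<close> is full in \<open>M'\<close> with such students (\<open>s\<close> is outranked). Counting project by
  project, \<open>l\<close> then has at least as many students better off in \<open>M\<close> in \<open>M'\<close> as in \<open>M\<close>, unless
  one of them is outranked; but then \<open>l\<close> is full in \<open>M'\<close>, no student better off in \<open>M'\<close> can be
  outranked in \<open>M\<close>, and the symmetric count gives the same inequality. In \<open>M\<^sup>\<or>\<close> the students
  better off in \<open>M\<close> take their \<open>M'\<close> projects and all others keep their \<open>M\<close> projects, so \<open>l\<close>
  has at least \<open>|M(l)|\<close> students in \<open>M\<^sup>\<or>\<close>, and symmetrically at least \<open>|M'(l)|\<close>.\<close>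

lemma spref_asym:
  assumes "spa_instance I" "s \<in> Stu I" "(p, q) \<in> spref I s"
  shows "(q, p) \<notin> spref I s"
proof -
  have "trans (spref I s)" "irrefl (spref I s)"
    using assms(1,2) by (auto simp: spa_instance_def strict_linear_order_on_def)
  then show ?thesis
    using assms(3) unfolding trans_def irrefl_def by blast
qed

lemma spref_total:
  assumes "spa_instance I" "s \<in> Stu I" "p \<in> acc I s" "q \<in> acc I s" "p \<noteq> q"
  shows "(p, q) \<in> spref I s \<or> (q, p) \<in> spref I s"
  using assms by (auto simp: spa_instance_def strict_linear_order_on_def total_on_def)

lemma lpref_trans:
  assumes "spa_instance I" "l \<in> Lec I" "(s, t) \<in> lpref I l" "(t, u) \<in> lpref I l"
  shows "(s, u) \<in> lpref I l"
  using assms by (auto simp: spa_instance_def strict_linear_order_on_def trans_def)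

lemma lpref_asym:
  assumes "spa_instance I" "l \<in> Lec I" "(s, t) \<in> lpref I l"
  shows "(t, s) \<notin> lpref I l"
proof -
  have "trans (lpref I l)" "irrefl (lpref I l)"
    using assms(1,2) by (auto simp: spa_instance_def strict_linear_order_on_def)
  then show ?thesis
    using assms(3) unfolding trans_def irrefl_def by blast
qed

lemma lpref_total:
  assumes "spa_instance I" "l \<in> Lec I" "s \<in> lstudents I l" "t \<in> lstudents I l" "s \<noteq> t"
  shows "(s, t) \<in> lpref I l \<or> (t, s) \<in> lpref I l"
  using assms by (auto simp: spa_instance_def strict_linear_order_on_def total_on_def)

lemma worst_exists:
  assumes inst: "spa_instance I" and l: "l \<in> Lec I"
    and X: "X \<subseteq> lstudents I l" "X \<noteq> {}"
  shows "\<exists>w. worst I l X w"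
proof -
  have field: "lpref I l \<subseteq> lstudents I l \<times> lstudents I l"
    and order: "strict_linear_order_on (lstudents I l) (lpref I l)"
    using inst l by (auto simp: spa_instance_def)
  have "finite (lstudents I l)"
    using inst by (auto simp: spa_instance_def lstudents_def)
  then have "finite (lpref I l)"
    using field finite_subset by blast
  moreover have "acyclic (lpref I l)"
    using order by (simp add: strict_linear_order_on_def acyclic_irrefl trancl_id)
  ultimately have "wf ((lpref I l)\<inverse>)"
    by (rule finite_acyclic_wf_converse)
  then obtain w where w: "w \<in> X" and nothing_worse: "\<forall>t. (w, t) \<in> lpref I l \<longrightarrow> t \<notin> X"
    using X(2) wfE_min by (metis converse_iff ex_in_conv)
  have "(t, w) \<in> lpref I l" if "t \<in> X" "t \<noteq> w" for t
    using lpref_total[OF inst l, of t w] that w nothing_worse X(1) by blast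
  then show ?thesis
    using w unfolding worst_def by blast
qed

lemma not_prefers_to_worstD:
  assumes inst: "spa_instance I" and l: "l \<in> Lec I"
    and X: "X \<subseteq> lstudents I l" "X \<noteq> {}"
    and s: "s \<in> lstudents I l" "s \<notin> X"
    and not_prefers: "\<not> prefers_to_worst I l s X"
    and t: "t \<in> X"
  shows "(t, s) \<in> lpref I l"
proof -
  obtain w where w: "worst I l X w"
    using worst_exists[OF inst l X] by blast
  then have "(s, w) \<notin> lpref I l" "w \<in> X"
    using not_prefers by (auto simp: prefers_to_worst_def worst_def)
  then have ws: "(w, s) \<in> lpref I l"
    using lpref_total[OF inst l s(1), of w] X(1) s(2) by blast
  show ?thesis
  proof (cases "t = w")
    case False
    then have "(t, w) \<in> lpref I l"
      using w t by (simp add: worst_def)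
    then show ?thesis
      using lpref_trans[OF inst l _ ws] by blast
  qed (use ws in simp)
qed

lemma matching_memD:
  assumes inst: "spa_instance I" and N: "matching I N" and sp: "(s, p) \<in> N"
  shows "acceptable I s p" "s \<in> Stu I" "p \<in> Proj I" "s \<in> lstudents I (lec I p)"
    "lec I p \<in> Lec I"
proof -
  show "acceptable I s p" "s \<in> Stu I" "s \<in> lstudents I (lec I p)"
    using N sp by (auto simp: matching_def acceptable_def)
  then show "p \<in> Proj I"
    using inst by (auto simp: spa_instance_def acceptable_def)
  then show "lec I p \<in> Lec I"
    using inst by (simp add: spa_instance_def)
qed

lemma matching_unique:
  "matching I N \<Longrightarrow> (s, p) \<in> N \<Longrightarrow> (s, q) \<in> N \<Longrightarrow> p = q"
  by (auto simp: matching_def)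

lemma Mstu_eq:
  "matching I N \<Longrightarrow> (s, p) \<in> N \<Longrightarrow> Mstu N s = p"
  unfolding Mstu_def by (blast dest: matching_unique)

lemma finite_Mlec:
  assumes "spa_instance I" "matching I N"
  shows "finite (Mlec I N l)"
proof (rule finite_subset)
  show "Mlec I N l \<subseteq> Stu I"
    using matching_memD[OF assms] by (auto simp: Mlec_def)
  show "finite (Stu I)"
    using assms(1) by (simp add: spa_instance_def)
qed

lemma Mproj_subset_Mlec: "Mproj N p \<subseteq> Mlec I N (lec I p)"
  by (auto simp: Mproj_def Mlec_def)

lemma finite_Mproj:
  "spa_instance I \<Longrightarrow> matching I N \<Longrightarrow> finite (Mproj N p)"
  using finite_Mlec Mproj_subset_Mlec finite_subset by metis

lemma card_Int_Mlec:
  assumes inst: "spa_instance I" and N: "matching I N"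
  shows "card (Z \<inter> Mlec I N l) = (\<Sum>p\<in>offered I l. card (Z \<inter> Mproj N p))"
proof -
  have "card (Z \<inter> Mlec I N l) = card (\<Union>p\<in>offered I l. Z \<inter> Mproj N p)"
    using matching_memD(3)[OF inst N]
    by (auto simp: Mlec_def Mproj_def offered_def intro!: arg_cong[where f = card])
  also have "\<dots> = (\<Sum>p\<in>offered I l. card (Z \<inter> Mproj N p))"
  proof (rule card_UN_disjoint)
    show "finite (offered I l)"
      using inst by (simp add: spa_instance_def offered_def)
  qed (use finite_Mproj[OF inst N] matching_unique[OF N] in \<open>auto simp: Mproj_def\<close>)
  finally show ?thesis .
qed

definition agreeing :: "('s \<times> 'p) set \<Rightarrow> ('s \<times> 'p) set \<Rightarrow> 's set" where
  "agreeing N N' = {s. \<exists>p. (s, p) \<in> N \<and> (s, p) \<in> N'}"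

definition better_off :: "('s,'p,'l) spa \<Rightarrow> ('s \<times> 'p) set \<Rightarrow> ('s \<times> 'p) set \<Rightarrow> 's set" where
  "better_off I N N' = {s. \<exists>p. (s, p) \<in> N \<and> (\<forall>q. (s, q) \<in> N' \<longrightarrow> (p, q) \<in> spref I s)}"

lemma agreeing_commute: "agreeing N N' = agreeing N' N"
  by (auto simp: agreeing_def)

lemma agreeing_Int_Mproj:
  "matching I N \<Longrightarrow> matching I N' \<Longrightarrow> agreeing N N' \<inter> Mproj N p = agreeing N N' \<inter> Mproj N' p"
  by (auto simp: agreeing_def Mproj_def dest: matching_unique)

lemma agreeing_Int_Mlec:
  "matching I N \<Longrightarrow> matching I N' \<Longrightarrow> agreeing N N' \<inter> Mlec I N l = agreeing N N' \<inter> Mlec I N' l"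
  by (auto simp: agreeing_def Mlec_def dest: matching_unique)

lemma better_offD:
  assumes "matching I N" "s \<in> better_off I N N'" "(s, p) \<in> N" "(s, q) \<in> N'"
  shows "(p, q) \<in> spref I s"
  using assms by (auto simp: better_off_def dest: matching_unique)

lemma assigned_cases:
  assumes inst: "spa_instance I" and N: "matching I N" and N': "matching I N'"
    and s: "assigned N s \<or> assigned N' s"
  shows "s \<in> agreeing N N' \<or> s \<in> better_off I N N' \<or> s \<in> better_off I N' N"
proof (cases "assigned N s \<and> assigned N' s")
  case True
  then obtain p q where pq: "(s, p) \<in> N" "(s, q) \<in> N'"
    by (auto simp: assigned_def)
  have "p = q \<or> (p, q) \<in> spref I s \<or> (q, p) \<in> spref I s"
    using spref_total[OF inst] matching_memD[OF inst N pq(1)] matching_memD[OF inst N' pq(2)]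
    by (auto simp: acceptable_def)
  moreover have "s \<in> agreeing N N'" if "p = q"
    using that pq by (auto simp: agreeing_def)
  moreover have "s \<in> better_off I N N'" if "(p, q) \<in> spref I s"
    using that pq matching_unique[OF N'] unfolding better_off_def by blast
  moreover have "s \<in> better_off I N' N" if "(q, p) \<in> spref I s"
    using that pq matching_unique[OF N] unfolding better_off_def by blast
  ultimately show ?thesis
    by blast
qed (use s in \<open>auto simp: assigned_def better_off_def\<close>)

lemma agreeing_better_off_disjoint:
  assumes inst: "spa_instance I" and N: "matching I N"
  shows "agreeing N N' \<inter> better_off I N N' = {}"
proof -
  have False if agree: "s \<in> agreeing N N'" and better: "s \<in> better_off I N N'" for s
  proof -
    obtain p where p: "(s, p) \<in> N" "(s, p) \<in> N'"
      using agree by (auto simp: agreeing_def)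
    then have "(p, p) \<in> spref I s"
      using better_offD[OF N better] by blast
    then show False
      using spref_asym[OF inst matching_memD(2)[OF inst N p(1)]] by blast
  qed
  then show ?thesis
    by blast
qed

lemma better_off_disjoint:
  assumes inst: "spa_instance I" and N: "matching I N" and N': "matching I N'"
  shows "better_off I N N' \<inter> better_off I N' N = {}"
proof -
  have False if better: "s \<in> better_off I N N'" and better': "s \<in> better_off I N' N" for s
  proof -
    obtain p q where pq: "(s, p) \<in> N" "(s, q) \<in> N'"
      using better better' by (auto simp: better_off_def)
    then have "(p, q) \<in> spref I s" "(q, p) \<in> spref I s"
      using better_offD[OF N better] better_offD[OF N' better'] by blast+
    then show False
      using spref_asym[OF inst matching_memD(2)[OF inst N pq(1)]] by blast
  qed
  then show ?thesis
    by blast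
qed

lemma card_split_agreeing_better_off:
  assumes inst: "spa_instance I" and N: "matching I N" and N': "matching I N'"
    and X: "finite X" "X \<subseteq> {s. assigned N s \<or> assigned N' s}"
  shows "card X = card (agreeing N N' \<inter> X) + card (better_off I N N' \<inter> X)
    + card (better_off I N' N \<inter> X)"
proof -
  let ?A = "agreeing N N' \<inter> X" and ?B = "better_off I N N' \<inter> X" and ?C = "better_off I N' N \<inter> X"
  have cover: "?A \<union> ?B \<union> ?C = X"
    using assigned_cases[OF inst N N'] X(2) by blast
  have disjoint: "?A \<inter> ?B = {}" "(?A \<union> ?B) \<inter> ?C = {}"
    using agreeing_better_off_disjoint[OF inst N] agreeing_better_off_disjoint[OF inst N']
      better_off_disjoint[OF inst N N'] agreeing_commute[of N N'] by blast+
  have "card (?A \<union> ?B \<union> ?C) = card (?A \<union> ?B) + card ?C"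
    by (rule card_Un_disjoint) (use X(1) disjoint in auto)
  also have "card (?A \<union> ?B) = card ?A + card ?B"
    by (rule card_Un_disjoint) (use X(1) disjoint in auto)
  finally show ?thesis
    by (simp only: cover)
qed

definition outranked :: "('s,'p,'l) spa \<Rightarrow> ('s \<times> 'p) set \<Rightarrow> 'l \<Rightarrow> 's \<Rightarrow> bool" where
  "outranked I N l s \<longleftrightarrow> lec_full I N l \<and> (\<forall>t\<in>Mlec I N l. (t, s) \<in> lpref I l)"

lemma outranked_asym:
  assumes inst: "spa_instance I" and l: "l \<in> Lec I"
    and s: "s \<in> Mlec I N l" "outranked I N' l s" and t: "t \<in> Mlec I N' l"
  shows "\<not> outranked I N l t"
  using lpref_asym[OF inst l] s t unfolding outranked_def by blast

lemma stable_rejects: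
  assumes inst: "spa_instance I" and N': "stable I N'"
    and acc: "acceptable I s p" and notin: "(s, p) \<notin> N'"
    and prefers: "\<not> assigned N' s \<or> (p, Mstu N' s) \<in> spref I s"
  shows "\<forall>t\<in>Mproj N' p. (t, s) \<in> lpref I (lec I p)"
    and "proj_full I N' p \<or> outranked I N' (lec I p) s"
proof -
  define l where "l = lec I p"
  have N'_matching: "matching I N'" and not_blocking: "\<not> blocking I N' s p"
    using N' by (auto simp: stable_def)
  have s: "s \<in> lstudents I l" and p: "p \<in> Proj I" "l \<in> Lec I"
    using acc inst by (auto simp: acceptable_def spa_instance_def l_def)
  have no_block:
    "\<not> (proj_under I N' p \<and> lec_under I N' l)"
    "\<not> (proj_under I N' p \<and> lec_full I N' l \<and> s \<in> Mlec I N' l)"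
    "\<not> (proj_under I N' p \<and> lec_full I N' l \<and> prefers_to_worst I l s (Mlec I N' l))"
    "\<not> (proj_full I N' p \<and> prefers_to_worst I l s (Mproj N' p))"
    using not_blocking acc notin prefers by (auto simp: blocking_def Let_def l_def)
  have s_notin: "s \<notin> Mproj N' p"
    using notin by (simp add: Mproj_def)
  have Mlec_lstudents: "Mlec I N' l \<subseteq> lstudents I l"
    using matching_memD(4)[OF inst N'_matching] by (auto simp: Mlec_def)
  have Mproj_Mlec: "Mproj N' p \<subseteq> Mlec I N' l"
    unfolding l_def by (rule Mproj_subset_Mlec)
  have caps: "0 < pcap I p" "0 < lcap I l"
    "card (Mproj N' p) \<le> pcap I p" "card (Mlec I N' l) \<le> lcap I l"
    using inst p N'_matching by (auto simp: spa_instance_def matching_def)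
  have "(\<forall>t\<in>Mproj N' p. (t, s) \<in> lpref I l) \<and> (proj_full I N' p \<or> outranked I N' l s)"
  proof (cases "proj_full I N' p")
    case True
    then have "Mproj N' p \<noteq> {}"
      using caps(1) by (auto simp: proj_full_def)
    then have "\<forall>t\<in>Mproj N' p. (t, s) \<in> lpref I l"
      using not_prefers_to_worstD[OF inst p(2) _ _ s s_notin] no_block(4) True
        Mlec_lstudents Mproj_Mlec by blast
    with True show ?thesis
      by blast
  next
    case False
    then have under: "proj_under I N' p"
      using caps(3) by (auto simp: proj_full_def proj_under_def)
    then have full: "lec_full I N' l" and "s \<notin> Mlec I N' l"
      using no_block(1,2) caps(4) by (auto simp: lec_full_def lec_under_def)
    moreover have "Mlec I N' l \<noteq> {}"
      using full caps(2) by (auto simp: lec_full_def)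
    ultimately have "\<forall>t\<in>Mlec I N' l. (t, s) \<in> lpref I l"
      using not_prefers_to_worstD[OF inst p(2) Mlec_lstudents _ s] no_block(3) under by blast
    then show ?thesis
      using full Mproj_Mlec by (auto simp: outranked_def)
  qed
  then show "\<forall>t\<in>Mproj N' p. (t, s) \<in> lpref I (lec I p)"
    and "proj_full I N' p \<or> outranked I N' (lec I p) s"
    by (simp_all add: l_def)
qed

lemma better_off_rejected:
  assumes inst: "spa_instance I" and N: "matching I N" and N': "stable I N'"
    and better: "s \<in> better_off I N N'" and sp: "(s, p) \<in> N"
  shows "\<forall>t\<in>Mproj N' p. (t, s) \<in> lpref I (lec I p)"
    and "proj_full I N' p \<or> outranked I N' (lec I p) s"
proof -
  have prefers_p: "(p, q) \<in> spref I s" if "(s, q) \<in> N'" for q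
    using better_offD[OF N better sp that] .
  have "(s, p) \<notin> N'"
    using prefers_p spref_asym[OF inst matching_memD(2)[OF inst N sp]] by blast
  moreover have "\<not> assigned N' s \<or> (p, Mstu N' s) \<in> spref I s"
    using prefers_p Mstu_eq[of I N'] N' by (auto simp: assigned_def stable_def)
  ultimately show "\<forall>t\<in>Mproj N' p. (t, s) \<in> lpref I (lec I p)"
    and "proj_full I N' p \<or> outranked I N' (lec I p) s"
    using stable_rejects[OF inst N' matching_memD(1)[OF inst N sp]] by blast+
qed

lemma card_better_off_Mproj_le:
  assumes inst: "spa_instance I" and N: "stable I N" and N': "stable I N'" and p: "p \<in> Proj I"
    and not_outranked: "\<forall>s\<in>better_off I N N' \<inter> Mproj N p. \<not> outranked I N' (lec I p) s"
  shows "card (better_off I N N' \<inter> Mproj N p) \<le> card (better_off I N N' \<inter> Mproj N' p)"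
proof (cases "better_off I N N' \<inter> Mproj N p = {}")
  case False
  then obtain s where better: "s \<in> better_off I N N'" and sp: "(s, p) \<in> N"
    by (auto simp: Mproj_def)
  have matchings: "matching I N" "matching I N'"
    using N N' by (auto simp: stable_def)
  have l: "lec I p \<in> Lec I"
    using inst p by (simp add: spa_instance_def)
  have rejected: "\<forall>t\<in>Mproj N' p. (t, s) \<in> lpref I (lec I p)" and full: "proj_full I N' p"
    using better_off_rejected[OF inst matchings(1) N' better sp] not_outranked better sp
    by (auto simp: Mproj_def)
  have "better_off I N' N \<inter> Mproj N' p = {}"
  proof -
    have False if better': "t \<in> better_off I N' N" and tp: "(t, p) \<in> N'" for t
    proof -
      have "(s, t) \<in> lpref I (lec I p)"
        using better_off_rejected(1)[OF inst matchings(2) N better' tp] sp by (simp add: Mproj_def)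
      moreover have "(t, s) \<in> lpref I (lec I p)"
        using rejected tp by (simp add: Mproj_def)
      ultimately show False
        using lpref_asym[OF inst l] by blast
    qed
    then show ?thesis
      by (auto simp: Mproj_def)
  qed
  moreover have "card (Mproj N p) \<le> card (Mproj N' p)"
    using full matchings(1) p by (simp add: proj_full_def matching_def)
  moreover have "card (Mproj N p) = card (agreeing N N' \<inter> Mproj N p)
      + card (better_off I N N' \<inter> Mproj N p) + card (better_off I N' N \<inter> Mproj N p)"
    and "card (Mproj N' p) = card (agreeing N N' \<inter> Mproj N' p)
      + card (better_off I N N' \<inter> Mproj N' p) + card (better_off I N' N \<inter> Mproj N' p)"
    using finite_Mproj[OF inst] matchings
    by (auto simp: Mproj_def assigned_def intro!: card_split_agreeing_better_off[OF inst matchings])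
  ultimately show ?thesis
    using agreeing_Int_Mproj[OF matchings, of p] by simp
qed simp

lemma card_better_off_Mlec_le:
  assumes inst: "spa_instance I" and N: "stable I N" and N': "stable I N'"
    and not_outranked: "\<forall>s\<in>better_off I N N' \<inter> Mlec I N l. \<not> outranked I N' l s"
  shows "card (better_off I N N' \<inter> Mlec I N l) \<le> card (better_off I N N' \<inter> Mlec I N' l)"
proof -
  have matchings: "matching I N" "matching I N'"
    using N N' by (auto simp: stable_def)
  have "card (better_off I N N' \<inter> Mproj N p) \<le> card (better_off I N N' \<inter> Mproj N' p)"
    if "p \<in> offered I l" for p
  proof (rule card_better_off_Mproj_le[OF inst N N'])
    show "p \<in> Proj I" "\<forall>s\<in>better_off I N N' \<inter> Mproj N p. \<not> outranked I N' (lec I p) s"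
      using that not_outranked Mproj_subset_Mlec[of N p I] by (auto simp: offered_def)
  qed
  then show ?thesis
    by (simp add: card_Int_Mlec[OF inst matchings(1)] card_Int_Mlec[OF inst matchings(2)] sum_mono)
qed

lemma card_better_off_Mlec_mono:
  assumes inst: "spa_instance I" and N: "stable I N" and N': "stable I N'" and l: "l \<in> Lec I"
  shows "card (better_off I N N' \<inter> Mlec I N l) \<le> card (better_off I N N' \<inter> Mlec I N' l)"
proof (cases "\<exists>s\<in>better_off I N N' \<inter> Mlec I N l. outranked I N' l s")
  case False
  then show ?thesis
    using card_better_off_Mlec_le[OF inst N N'] by blast
next
  case True
  then obtain s where s: "s \<in> Mlec I N l" "outranked I N' l s"
    by blast
  have matchings: "matching I N" "matching I N'"
    using N N' by (auto simp: stable_def)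
  have "card (better_off I N' N \<inter> Mlec I N' l) \<le> card (better_off I N' N \<inter> Mlec I N l)"
    using card_better_off_Mlec_le[OF inst N' N] outranked_asym[OF inst l s] by blast
  moreover have "card (Mlec I N l) \<le> card (Mlec I N' l)"
    using s(2) matchings(1) l by (simp add: outranked_def lec_full_def matching_def)
  moreover have "card (Mlec I N l) = card (agreeing N N' \<inter> Mlec I N l)
      + card (better_off I N N' \<inter> Mlec I N l) + card (better_off I N' N \<inter> Mlec I N l)"
    and "card (Mlec I N' l) = card (agreeing N N' \<inter> Mlec I N' l)
      + card (better_off I N N' \<inter> Mlec I N' l) + card (better_off I N' N \<inter> Mlec I N' l)"
    using finite_Mlec[OF inst] matchings
    by (auto simp: Mlec_def assigned_def intro!: card_split_agreeing_better_off[OF inst matchings])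
  ultimately show ?thesis
    using agreeing_Int_Mlec[OF matchings, of l] by simp
qed

lemma Mjoin_commute: "Mjoin I N N' = Mjoin I N' N"
  by (auto simp: Mjoin_def)

lemma Mjoin_subset: "Mjoin I N N' \<subseteq> N \<union> N'"
  by (auto simp: Mjoin_def)

lemma agreeing_in_Mjoin:
  "matching I N \<Longrightarrow> s \<in> agreeing N N' \<Longrightarrow> (s, p) \<in> N \<Longrightarrow> (s, p) \<in> Mjoin I N N'"
  by (auto simp: agreeing_def Mjoin_def dest: matching_unique)

lemma better_off_in_Mjoin:
  "s \<in> better_off I N N' \<Longrightarrow> (s, q) \<in> N' \<Longrightarrow> (s, q) \<in> Mjoin I N N'"
  by (auto simp: better_off_def Mjoin_def)

lemma card_Mlec_le_Mjoin:
  assumes inst: "spa_instance I" and N: "stable I N" and N': "stable I N'" and l: "l \<in> Lec I"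
  shows "card (Mlec I N l) \<le> card (Mlec I (Mjoin I N N') l)"
proof -
  let ?A = "agreeing N N'" and ?P = "better_off I N N'" and ?Q = "better_off I N' N"
    and ?J = "Mlec I (Mjoin I N N') l"
  have matchings: "matching I N" "matching I N'"
    using N N' by (auto simp: stable_def)
  have "?J \<subseteq> Mlec I N l \<union> Mlec I N' l"
    unfolding Mlec_def using Mjoin_subset[of I N N'] by blast
  then have J: "finite ?J" "?J \<subseteq> {s. assigned N s \<or> assigned N' s}"
    using finite_Mlec[OF inst matchings(1)] finite_Mlec[OF inst matchings(2)]
    by (auto simp: Mlec_def assigned_def elim: finite_subset)
  have "card (Mlec I N l) = card (?A \<inter> Mlec I N l) + card (?P \<inter> Mlec I N l) + card (?Q \<inter> Mlec I N l)"
    using finite_Mlec[OF inst matchings(1)]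
    by (intro card_split_agreeing_better_off[OF inst matchings]) (auto simp: Mlec_def assigned_def)
  also have "\<dots> \<le> card (?A \<inter> Mlec I N l) + card (?P \<inter> Mlec I N' l) + card (?Q \<inter> Mlec I N l)"
    using card_better_off_Mlec_mono[OF inst N N' l] by simp
  also have "\<dots> \<le> card (?A \<inter> ?J) + card (?P \<inter> ?J) + card (?Q \<inter> ?J)"
  proof -
    have "?A \<inter> Mlec I N l \<subseteq> ?A \<inter> ?J" "?P \<inter> Mlec I N' l \<subseteq> ?P \<inter> ?J"
      "?Q \<inter> Mlec I N l \<subseteq> ?Q \<inter> ?J"
      using agreeing_in_Mjoin[OF matchings(1), of _ N'] better_off_in_Mjoin[of _ I N N']
        better_off_in_Mjoin[of _ I N' N, unfolded Mjoin_commute[of I N' N]]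
      unfolding Mlec_def by blast+
    then show ?thesis
      using J(1) by (intro add_mono card_mono) auto
  qed
  also have "\<dots> = card ?J"
    by (rule card_split_agreeing_better_off[OF inst matchings J, symmetric])
  finally show ?thesis .
qed

theorem lemma9:
  fixes I :: "('s,'p,'l) spa"
    and M M' :: "('s \<times> 'p) set"
    and l :: 'l
  assumes "spa_instance I"
    and "stable I M" and "stable I M'"
    and "l \<in> Lec I"
    and "lec_under I (Mjoin I M M') l"
  shows "lec_under I M l \<and> lec_under I M' l"
proof -
  have "card (Mlec I M l) \<le> card (Mlec I (Mjoin I M M') l)"
    using card_Mlec_le_Mjoin[OF assms(1-4)] .
  moreover have "card (Mlec I M' l) \<le> card (Mlec I (Mjoin I M M') l)"
    using card_Mlec_le_Mjoin[OF assms(1,3,2,4)] by (simp add: Mjoin_commute)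
  ultimately show ?thesis
    using assms(5) unfolding lec_under_def by simp
qed

end
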